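(* Let $q$ be an odd prime power, $d$ a positive integer, and $\varphi_d$ the coloring defined below. Let $\{s_1,\dots,s_t\} \subseteq (\mathbb{F}_q^* )^d$ be a set of $t$ linearly independent vectors and let $a,b \in (\mathbb{F}_q^* )^d$ (with $a\neq b$, $a\ne s_i$, $b\ne s_i$ for all $i$) be such that there are colors $\alpha,\beta\in C_d$ with $\varphi_d(a,b) = \varphi_d(a,s_i) = \alpha$ and $\varphi_d(b,s_i) = \beta$ for each $1 \le i \le t$. Then $s_1,\dots,s_t,b$ are linearly independent.
   Context: $\mathbb{F}_q^*$ is the set of nonzero elements of $\mathbb{F}_q$, endowed with an arbitrary fixed linear order; $(\mathbb{F}_q^* )^d$ is ordered lexicographically with respect to it. Let $C_d = \mathrm{DOT} \sqcup \mathrm{ZERO}\sqcup\mathrm{UP}\sqcup\mathrm{DOWN}$, where $\mathrm{DOT} = \mathbb{F}_q^*$ and ZERO, UP, DOWN are three disjoint copies of $\{1,\dots,d\}\times \mathbb{F}_q$. For distinct $x<y$ in $(\mathbb{F}_q^* )^d$, let $i$ be the first coordinate where $x=(x_1,\dots,x_d)$ and $y$ differ, and let $x\cdot y$ be the standard dot product; define $\varphi_d(x,y)=\varphi_d(y,x)$ to be $(i,x_i+y_i)$ in ZERO if $x\cdot y=0$; $(i,x_i+y_i)$ in UP if $x\cdot y\ne 0$ and $x\cdot y=x\cdot x$; $(i,x_i+y_i)$ in DOWN if $x\cdot y\notin\{0,x\cdot x\}$ and $x\cdot y=y\cdot y$; and $x\cdot y\in \mathrm{DOT}$ otherwise. 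*)

theory Defs
  imports "HOL-Analysis.Analysis"
begin

text \<open>Colours: DOT = F_q^*, and ZERO, UP, DOWN are copies of {1..d} x F_q.
  The coordinate set {1..d} is represented by the finite well-ordered index type 'n
  (with d = CARD('n)); its order plays the role of the order 1 < 2 < ... < d.\<close>
datatype ('n, 'a) color = DOT 'a | ZERO 'n 'a | UP 'n 'a | DOWN 'n 'a

definition dotp :: "('a::field ^ 'n::finite) \<Rightarrow> 'a ^ 'n \<Rightarrow> 'a" where
  "dotp x y = (\<Sum>i\<in>UNIV. x $ i * y $ i)"

definition nzvec :: "('a::field ^ 'n) \<Rightarrow> bool" where
  "nzvec x \<longleftrightarrow> (\<forall>i. x $ i \<noteq> 0)"

definition firstdiff :: "('a ^ 'n::{finite,wellorder}) \<Rightarrow> ('a ^ 'n::{finite,wellorder}) \<Rightarrow> 'n::{finite,wellorder}" where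
  "firstdiff x y = (LEAST i. x $ i \<noteq> y $ i)"

definition lexless :: "'a rel \<Rightarrow> ('a ^ 'n::{finite,wellorder}) \<Rightarrow> ('a ^ 'n::{finite,wellorder}) \<Rightarrow> bool" where
  "lexless ord x y \<longleftrightarrow> x \<noteq> y \<and> (x $ firstdiff x y, y $ firstdiff x y) \<in> ord"

definition phi0 :: "('a::field ^ 'n::{finite,wellorder}) \<Rightarrow> ('a ^ 'n::{finite,wellorder}) \<Rightarrow> ('n::{finite,wellorder}, 'a) color" where
  "phi0 x y = (let i = firstdiff x y; s = x $ i + y $ i in
     if dotp x y = 0 then ZERO i s
     else if dotp x y = dotp x x then UP i s
     else if dotp x y = dotp y y then DOWN i s
     else DOT (dotp x y))"

text \<open>The symmetric colouring phi_d (only meaningful for distinct x, y).\<close>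
definition phi :: "'a rel \<Rightarrow> ('a::field ^ 'n::{finite,wellorder}) \<Rightarrow> ('a ^ 'n::{finite,wellorder}) \<Rightarrow> ('n::{finite,wellorder}, 'a) color" where
  "phi ord x y = (if lexless ord x y then phi0 x y else phi0 y x)"

end

theory Submission
  imports Defs
begin

text \<open>Suppose b is a combination of finitely many vectors of S. Whatever the colour \<alpha> is,
  the vectors y \<noteq> a with \<open>phi ord a y = \<alpha>\<close> lie on an affine hyperplane \<open>dotp w y = k\<close>
  with k \<noteq> 0 (w = a for a DOT colour, w the i-th unit vector for a colour at coordinate i), so
  the coefficients sum to 1. Likewise the vectors y \<noteq> b with \<open>phi ord b y = \<beta>\<close> lie on an
  affine hyperplane missing b; yet b, as an affine combination of them, lies on it.\<close>

fun color_index :: "('n, 'a) color \<Rightarrow> 'n" where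
  "color_index (ZERO i c) = i" | "color_index (UP i c) = i" | "color_index (DOWN i c) = i"
| "color_index (DOT c) = undefined"

fun color_value :: "('n, 'a) color \<Rightarrow> 'a" where
  "color_value (ZERO i c) = c" | "color_value (UP i c) = c" | "color_value (DOWN i c) = c"
| "color_value (DOT c) = c"

lemma firstdiff_commute: "firstdiff x y = firstdiff y x"
  unfolding firstdiff_def by metis

lemma firstdiff_neq:
  assumes "x \<noteq> y"
  shows "x $ firstdiff x y \<noteq> y $ firstdiff x y"
proof -
  from assms obtain k where "x $ k \<noteq> y $ k" by (metis vec_eq_iff)
  then show ?thesis unfolding firstdiff_def by (rule LeastI)
qed

lemma dotp_commute: "dotp x y = dotp y x"
  unfolding dotp_def by (simp add: mult.commute)

lemma dotp_axis_left: "dotp (axis i 1) y = y $ i"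
  unfolding dotp_def axis_def by (simp add: if_distrib[of "\<lambda>z. z * _"] cong: if_cong)

lemma dotp_sum_scaled_right: "dotp x (\<Sum>v\<in>T. c v *s v) = (\<Sum>v\<in>T. c v * dotp x v)"
proof -
  have "dotp x (\<Sum>v\<in>T. c v *s v) = (\<Sum>i\<in>UNIV. \<Sum>v\<in>T. x $ i * (c v * v $ i))"
    unfolding dotp_def by (simp add: sum_distrib_left)
  also have "\<dots> = (\<Sum>v\<in>T. \<Sum>i\<in>UNIV. c v * (x $ i * v $ i))"
    by (subst sum.swap) (simp add: algebra_simps)
  finally show ?thesis
    unfolding dotp_def by (simp add: sum_distrib_left)
qed

lemma phi_DOT_dotp:
  assumes "phi ord x y = DOT m"
  shows "dotp x y = m" "m \<noteq> 0" "m \<noteq> dotp x x"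
  using assms unfolding phi_def phi0_def Let_def
  by (auto split: if_splits simp: dotp_commute)

lemma phi_not_DOT_firstdiff:
  assumes "\<forall>m. phi ord x y \<noteq> DOT m"
  shows "color_index (phi ord x y) = firstdiff x y"
    "color_value (phi ord x y) = x $ firstdiff x y + y $ firstdiff x y"
  using assms unfolding phi_def phi0_def Let_def
  by (auto split: if_splits simp: firstdiff_commute add.commute)

lemma phi_fibre_in_affine_hyperplane:
  assumes Y_ne: "Y \<noteq> {}"
    and Y_nz: "\<forall>y\<in>Y. nzvec y"
    and Y_fibre: "\<forall>y\<in>Y. y \<noteq> x \<and> phi ord x y = \<gamma>"
  obtains w k where "\<forall>y\<in>Y. dotp w y = k" "k \<noteq> 0" "dotp w x \<noteq> k"
proof -
  from Y_ne obtain y0 where y0: "y0 \<in> Y" by blast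
  show ?thesis
  proof (cases "\<exists>m. \<gamma> = DOT m")
    case True
    then obtain m where m: "\<gamma> = DOT m" by blast
    have "m \<noteq> 0" "dotp x x \<noteq> m"
      using phi_DOT_dotp[of ord x y0 m] Y_fibre y0 m by auto
    moreover have "\<forall>y\<in>Y. dotp x y = m"
      using phi_DOT_dotp(1)[of ord x _ m] Y_fibre m by blast
    ultimately show ?thesis
      using that by blast
  next
    case False
    define i where "i = firstdiff x y0"
    have coords: "color_index \<gamma> = firstdiff x y" "color_value \<gamma> = x $ firstdiff x y + y $ firstdiff x y"
      if "y \<in> Y" for y
      using phi_not_DOT_firstdiff[of ord x y] False Y_fibre that by auto
    have "\<forall>y\<in>Y. dotp (axis i 1) y = y0 $ i"
      using coords coords[OF y0] by (simp add: dotp_axis_left i_def)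
    moreover have "y0 $ i \<noteq> 0"
      using Y_nz y0 unfolding nzvec_def by blast
    moreover have "dotp (axis i 1) x \<noteq> y0 $ i"
      using firstdiff_neq[of x y0] Y_fibre y0 unfolding dotp_axis_left i_def by blast
    ultimately show ?thesis
      using that by blast
  qed
qed

lemma coefficient_sum_eq_1:
  assumes "\<forall>v\<in>T. dotp w v = k" "dotp w (\<Sum>v\<in>T. c v *s v) = k" "k \<noteq> 0"
  shows "(\<Sum>v\<in>T. c v) = 1"
  using assms by (simp add: dotp_sum_scaled_right sum_distrib_right[symmetric])

lemma dotp_affine_combination:
  assumes "\<forall>v\<in>T. dotp w v = k" "(\<Sum>v\<in>T. c v) = 1"
  shows "dotp w (\<Sum>v\<in>T. c v *s v) = k"
  using assms by (simp add: dotp_sum_scaled_right sum_distrib_right[symmetric])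

theorem lemma3p3:
  fixes ord :: "'a::{field,finite} rel"
    and S :: "('a ^ 'n::{finite,wellorder}) set"
    and a b :: "'a ^ 'n::{finite,wellorder}"
  assumes q_odd: "odd CARD('a)"
    and ord_lin: "linear_order_on (UNIV - {0}) ord"
    and S_nz: "\<forall>s\<in>S. nzvec s"
    and a_nz: "nzvec a" and b_nz: "nzvec b"
    and S_indep: "vec.independent S"
    and ab: "a \<noteq> b" and aS: "a \<notin> S" and bS: "b \<notin> S"
    and colors: "\<exists>\<alpha> \<beta>. phi ord a b = \<alpha> \<and> (\<forall>s\<in>S. phi ord a s = \<alpha> \<and> phi ord b s = \<beta>)"
  shows "vec.independent (insert b S)"
proof -
  obtain \<beta> where \<alpha>_S: "\<forall>s\<in>S. phi ord a s = phi ord a b" and \<beta>_S: "\<forall>s\<in>S. phi ord b s = \<beta>"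
    using colors by metis
  have "b \<notin> vec.span S"
  proof
    assume "b \<in> vec.span S"
    then obtain T c where "T \<subseteq> S" and b_comb: "b = (\<Sum>v\<in>T. c v *s v)"
      unfolding vec.span_explicit by blast
    have "T \<noteq> {}"
      using b_comb b_nz unfolding nzvec_def by auto
    have "\<forall>y\<in>insert b T. nzvec y" "\<forall>y\<in>insert b T. y \<noteq> a \<and> phi ord a y = phi ord a b"
      using \<open>T \<subseteq> S\<close> S_nz b_nz ab aS \<alpha>_S by auto
    then obtain w k where "\<forall>y\<in>insert b T. dotp w y = k" "k \<noteq> 0"
      by (rule phi_fibre_in_affine_hyperplane[OF insert_not_empty])
    then have coeff_sum: "(\<Sum>v\<in>T. c v) = 1"
      using coefficient_sum_eq_1[of T w k c] b_comb by simp
    have "\<forall>y\<in>T. nzvec y" "\<forall>y\<in>T. y \<noteq> b \<and> phi ord b y = \<beta>"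
      using \<open>T \<subseteq> S\<close> S_nz bS \<beta>_S by auto
    then obtain w' k' where "\<forall>y\<in>T. dotp w' y = k'" "dotp w' b \<noteq> k'"
      by (rule phi_fibre_in_affine_hyperplane[OF \<open>T \<noteq> {}\<close>])
    with coeff_sum show False
      using dotp_affine_combination[of T w' k' c] b_comb by simp
  qed
  then show ?thesis
    using S_indep bS by (intro vec.independent_insertI) auto
qed

end
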